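(* Let $F|R$ be an extension of ordered fields with canonical valuation $v$ and assume that $vR$ is not a convex subgroup of $vF$. Then there is no injective map $\tilde\iota:\mathcal C(R)\to\mathcal C(F)$ that is continuous with respect to the full topologies and compatible with restriction.
   Context: The canonical valuation $v$ of an ordered field has as valuation ring the convex hull of $\mathbb Z$. For an ordered field $K$, a cut is a pair $(D,E)$ with $D<E$, $D\cup E=K$; $\mathcal C(K)$ is the set of cuts, ordered by $(D_1,E_1)<(D_2,E_2)$ iff $D_1\subsetneq D_2$. For nonempty $A\subseteq K$, $A^+=(D,K\setminus D)$ with $D$ the smallest initial segment containing $A$, and $A^-=(K\setminus E,E)$ with $E$ the smallest final segment containing $A$. For $a\in K$ and a final segment $S$ of $vK$ (possibly empty), $B_S(a,K)=\{b\in K\mid v(a-b)\in S\cup\{\infty\}\}$ is a ball. Two cuts are equivalent if they are equal or are $B^-$ and $B^+$ for the same ball $B$; a subset of $\mathcal C(K)$ is full if closed under equivalence. The interval topology on $\mathcal C(K)$ has basic open sets $(C_1,C_2)$, $(C_1,(K,\emptyset)]$, $[(\emptyset,K),C_2)$; the full topology consists of all full sets open in the interval topology. Restriction of a cut $(D',E')$ of $F$ to $R$ is $(D'\cap R,E'\cap R)$; $\tilde\iota$ is compatible with restriction if the restriction of $\tilde\iota(C)$ is $C$ for all $C$. *)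

theory Defs
  imports Main
begin

text \<open>Ordered fields: the big field F is the whole type 'a (a linordered_field);
  the subfield R is a subset of it.  Cuts, balls etc. are defined relative to a carrier K.\<close>

definition subfield :: "'a::linordered_field set \<Rightarrow> bool" where
  "subfield R \<longleftrightarrow> 0 \<in> R \<and> 1 \<in> R \<and>
     (\<forall>x\<in>R. \<forall>y\<in>R. x + y \<in> R \<and> x * y \<in> R) \<and>
     (\<forall>x\<in>R. - x \<in> R) \<and> (\<forall>x\<in>R. x \<noteq> 0 \<longrightarrow> inverse x \<in> R)"

text \<open>Valuation ring of the canonical valuation: convex hull of the integers.\<close>
definition vring :: "'a::linordered_field set" where
  "vring = {x. \<exists>m n::int. of_int m \<le> x \<and> x \<le> of_int n}"

text \<open>vle a b means v(a) \<le> v(b), i.e. b \<in> a * vring (with v(0) = \<infinity>).\<close>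
definition vle :: "'a::linordered_field \<Rightarrow> 'a \<Rightarrow> bool" where
  "vle a b \<longleftrightarrow> b = 0 \<or> (a \<noteq> 0 \<and> b / a \<in> vring)"

text \<open>The value v(a), represented as the class of elements with the same value;
  v(0) = {0} plays the role of \<infinity>.\<close>
definition vclass :: "'a::linordered_field \<Rightarrow> 'a set" where
  "vclass a = {b. vle a b \<and> vle b a}"

definition value_set :: "'a::linordered_field set \<Rightarrow> 'a set set" where
  "value_set K = vclass ` (K - {0})"

definition value_convex :: "'a::linordered_field set \<Rightarrow> bool" where
  "value_convex R \<longleftrightarrow> (\<forall>a\<in>R - {0}. \<forall>b\<in>R - {0}. \<forall>c. c \<noteq> 0 \<and> vle a c \<and> vle c b
       \<longrightarrow> vclass c \<in> value_set R)"

definition final_segment :: "'a::linordered_field set \<Rightarrow> 'a set set \<Rightarrow> bool" where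
  "final_segment K S \<longleftrightarrow> S \<subseteq> value_set K \<and>
     (\<forall>x\<in>K - {0}. \<forall>y\<in>K - {0}. vclass x \<in> S \<and> vle x y \<longrightarrow> vclass y \<in> S)"

definition ball :: "'a::linordered_field set \<Rightarrow> 'a set set \<Rightarrow> 'a \<Rightarrow> 'a set" where
  "ball K S a = {b\<in>K. vclass (a - b) \<in> S \<or> a - b = 0}"

definition is_ball :: "'a::linordered_field set \<Rightarrow> 'a set \<Rightarrow> bool" where
  "is_ball K B \<longleftrightarrow> (\<exists>a\<in>K. \<exists>S. final_segment K S \<and> B = ball K S a)"

type_synonym 'a cut = "'a set \<times> 'a set"

definition cuts :: "'a::linordered_field set \<Rightarrow> 'a cut set" where
  "cuts K = {(D, E). D \<union> E = K \<and> (\<forall>d\<in>D. \<forall>e\<in>E. d < e)}"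

definition cut_less :: "'a cut \<Rightarrow> 'a cut \<Rightarrow> bool" where
  "cut_less C1 C2 \<longleftrightarrow> fst C1 \<subset> fst C2"

definition cut_plus :: "'a::linordered_field set \<Rightarrow> 'a set \<Rightarrow> 'a cut" where
  "cut_plus K A = (let D = {x\<in>K. \<exists>a\<in>A. x \<le> a} in (D, K - D))"

definition cut_minus :: "'a::linordered_field set \<Rightarrow> 'a set \<Rightarrow> 'a cut" where
  "cut_minus K A = (let E = {x\<in>K. \<exists>a\<in>A. a \<le> x} in (K - E, E))"

definition cut_equiv :: "'a::linordered_field set \<Rightarrow> 'a cut \<Rightarrow> 'a cut \<Rightarrow> bool" where
  "cut_equiv K C1 C2 \<longleftrightarrow> C1 = C2 \<or>
     (\<exists>B. is_ball K B \<and> ((C1 = cut_minus K B \<and> C2 = cut_plus K B) \<or>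
                          (C1 = cut_plus K B \<and> C2 = cut_minus K B)))"

definition full_set :: "'a::linordered_field set \<Rightarrow> 'a cut set \<Rightarrow> bool" where
  "full_set K U \<longleftrightarrow> U \<subseteq> cuts K \<and>
     (\<forall>C1\<in>U. \<forall>C2\<in>cuts K. cut_equiv K C1 C2 \<longrightarrow> C2 \<in> U)"

definition interval_basic :: "'a::linordered_field set \<Rightarrow> 'a cut set \<Rightarrow> bool" where
  "interval_basic K W \<longleftrightarrow>
     (\<exists>C1\<in>cuts K. \<exists>C2\<in>cuts K. W = {C\<in>cuts K. cut_less C1 C \<and> cut_less C C2}) \<or>
     (\<exists>C1\<in>cuts K. W = {C\<in>cuts K. cut_less C1 C \<and> (cut_less C (K, {}) \<or> C = (K, {}))}) \<or>
     (\<exists>C2\<in>cuts K. W = {C\<in>cuts K. (cut_less ({}, K) C \<or> C = ({}, K)) \<and> cut_less C C2})"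

definition interval_open :: "'a::linordered_field set \<Rightarrow> 'a cut set \<Rightarrow> bool" where
  "interval_open K U \<longleftrightarrow> U \<subseteq> cuts K \<and>
     (\<forall>C\<in>U. \<exists>W. interval_basic K W \<and> C \<in> W \<and> W \<subseteq> U)"

definition full_open :: "'a::linordered_field set \<Rightarrow> 'a cut set \<Rightarrow> bool" where
  "full_open K U \<longleftrightarrow> full_set K U \<and> interval_open K U"

definition full_continuous ::
  "'a::linordered_field set \<Rightarrow> 'a set \<Rightarrow> ('a cut \<Rightarrow> 'a cut) \<Rightarrow> bool" where
  "full_continuous R F f \<longleftrightarrow> (\<forall>C\<in>cuts R. f C \<in> cuts F) \<and>
     (\<forall>U. full_open F U \<longrightarrow> full_open R {C\<in>cuts R. f C \<in> U})"

definition compatible_restriction ::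
  "'a::linordered_field set \<Rightarrow> ('a cut \<Rightarrow> 'a cut) \<Rightarrow> bool" where
  "compatible_restriction R f \<longleftrightarrow> (\<forall>C\<in>cuts R. (fst (f C) \<inter> R, snd (f C) \<inter> R) = C)"

end

theory Submission
  imports Defs
begin

text \<open>Let \<open>v(a) \<le> v(c) \<le> v(b)\<close> with \<open>a, b \<in> R\<close> and \<open>v(c) \<notin> vR\<close>, and let \<open>Y \<supset> Y'\<close> be the balls
  around 0 of values \<open>\<ge> v(c)\<close> and \<open>> v(c)\<close>. They meet \<open>R\<close> in the same set, whose upper cut \<open>C\<close>
  in \<open>R\<close> is approached from above by cuts \<open>r\<^sup>+\<close> with \<open>r \<in> R\<close> beyond \<open>Y\<close>, and from below by cuts
  \<open>s\<^sup>+\<close> with \<open>0 < s \<in> R \<inter> Y\<close>. The cuts of \<open>F\<close> strictly inside a ball around 0, and those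
  strictly outside it, form full open sets. Continuity and compatibility with restriction
  therefore forbid \<open>\<iota>(C)\<close> to lie inside \<open>Y\<close> (it would contain some \<open>r \<notin> Y\<close>) and to lie
  outside \<open>Y'\<close> (it would omit some \<open>2s \<in> Y'\<close>). But \<open>\<iota>(C)\<close> contains 0, so if it is not
  inside \<open>Y\<close> it lies above all of \<open>Y\<close>, hence outside \<open>Y'\<close>.\<close>

section \<open>The canonical valuation\<close>

lemma vring_iff_abs_le: "(x::'a::linordered_field) \<in> vring \<longleftrightarrow> (\<exists>n::int. \<bar>x\<bar> \<le> of_int n)"
proof
  assume "x \<in> vring"
  then obtain m n :: int where h: "of_int m \<le> x" "x \<le> of_int n" unfolding vring_def by blast
  have "of_int n \<le> (of_int (\<bar>m\<bar> + \<bar>n\<bar>) :: 'a)" "- of_int m \<le> (of_int (\<bar>m\<bar> + \<bar>n\<bar>) :: 'a)"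
    unfolding of_int_minus[symmetric] of_int_le_iff by linarith+
  with h have "\<bar>x\<bar> \<le> of_int (\<bar>m\<bar> + \<bar>n\<bar>)" by (simp add: abs_le_iff)
  then show "\<exists>n::int. \<bar>x\<bar> \<le> of_int n" ..
next
  assume "\<exists>n::int. \<bar>x\<bar> \<le> of_int n"
  then obtain n :: int where "of_int (-n) \<le> x" "x \<le> of_int n"
    by (metis abs_le_iff minus_le_iff of_int_minus)
  then show "x \<in> vring" unfolding vring_def by blast
qed

lemma vring_mult: "x \<in> vring \<Longrightarrow> y \<in> vring \<Longrightarrow> (x::'a::linordered_field) * y \<in> vring"
proof -
  assume "x \<in> vring" "y \<in> vring"
  then obtain m n :: int where h: "\<bar>x\<bar> \<le> of_int m" "\<bar>y\<bar> \<le> of_int n"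
    unfolding vring_iff_abs_le by blast
  moreover have "0 \<le> (of_int m :: 'a)" using h(1) abs_ge_zero order_trans by blast
  ultimately have "\<bar>x * y\<bar> \<le> of_int (m * n)"
    unfolding abs_mult of_int_mult by (intro mult_mono) auto
  then show ?thesis unfolding vring_iff_abs_le ..
qed

lemma vring_add: "x \<in> vring \<Longrightarrow> y \<in> vring \<Longrightarrow> (x::'a::linordered_field) + y \<in> vring"
proof -
  assume "x \<in> vring" "y \<in> vring"
  then obtain m n :: int where h: "\<bar>x\<bar> \<le> of_int m" "\<bar>y\<bar> \<le> of_int n"
    unfolding vring_iff_abs_le by blast
  then have "\<bar>x + y\<bar> \<le> of_int (m + n)" using abs_triangle_ineq[of x y] by simp
  then show ?thesis unfolding vring_iff_abs_le ..
qed

lemma vring_of_int: "(of_int k :: 'a::linordered_field) \<in> vring"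
  unfolding vring_def by blast

lemma vle_0 [simp]: "vle a 0"
  unfolding vle_def by simp

lemma vle_0_left_iff [simp]: "vle 0 b \<longleftrightarrow> b = 0"
  unfolding vle_def by simp

lemma vle_trans: "vle a b \<Longrightarrow> vle b c \<Longrightarrow> vle a (c::'a::linordered_field)"
  unfolding vle_def by (auto dest: vring_mult)

lemma vle_if_abs_le: "\<bar>h\<bar> \<le> \<bar>s::'a::linordered_field\<bar> \<Longrightarrow> vle s h"
proof (cases "s = 0")
  case False
  assume "\<bar>h\<bar> \<le> \<bar>s\<bar>"
  with False have "\<bar>h / s\<bar> \<le> of_int 1" by (simp add: abs_divide divide_le_eq_1)
  then show ?thesis unfolding vle_def vring_iff_abs_le using False by blast
qed (simp add: vle_def)

lemma vle_total: "vle a b \<or> vle b (a::'a::linordered_field)"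
  using vle_if_abs_le[of a b] vle_if_abs_le[of b a] by linarith

lemma vle_mult_of_int: "vle (x::'a::linordered_field) (of_int k * x)"
  unfolding vle_def by (cases "x = 0") (simp_all add: vring_of_int)

lemma vle_add_right: "vle s t \<Longrightarrow> vle s (s + (t::'a::linordered_field))"
proof (cases "s = 0")
  case False
  assume "vle s t"
  with False have "1 + t / s \<in> vring" unfolding vle_def
    using vring_add[OF vring_of_int[of 1]] by (auto intro: vring_of_int[of 1, simplified])
  moreover have "1 + t / s = (s + t) / s" using False by (simp add: field_simps)
  ultimately show ?thesis unfolding vle_def using False by auto
qed simp

section \<open>Balls around zero\<close>

text \<open>A ball \<open>B\<^sub>S(0, F)\<close> for a final segment \<open>S\<close> of \<open>vF\<close> is exactly a set containing 0 that is
  closed under passing to elements of larger or equal value.\<close>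

definition zero_ball :: "'a::linordered_field set \<Rightarrow> bool" where
  "zero_ball S \<longleftrightarrow> 0 \<in> S \<and> (\<forall>s\<in>S. \<forall>h. vle s h \<longrightarrow> h \<in> S)"

lemma zero_ballD: "zero_ball S \<Longrightarrow> s \<in> S \<Longrightarrow> vle s h \<Longrightarrow> h \<in> S"
  unfolding zero_ball_def by blast

lemma zero_ball_zero: "zero_ball S \<Longrightarrow> 0 \<in> S"
  unfolding zero_ball_def by blast

lemma zero_ball_abs_le: "zero_ball S \<Longrightarrow> s \<in> S \<Longrightarrow> \<bar>h\<bar> \<le> \<bar>s\<bar> \<Longrightarrow> h \<in> S"
  using zero_ballD vle_if_abs_le by blast

lemma zero_ball_abs_less: "zero_ball S \<Longrightarrow> s \<in> S \<Longrightarrow> w \<notin> S \<Longrightarrow> \<bar>s\<bar> < \<bar>w\<bar>"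
  using zero_ball_abs_le[of S s w] by fastforce

lemma zero_ball_minus: "zero_ball S \<Longrightarrow> s \<in> S \<Longrightarrow> - s \<in> S"
  using zero_ball_abs_le by fastforce

lemma zero_ball_abs: "zero_ball S \<Longrightarrow> s \<in> S \<Longrightarrow> \<bar>s\<bar> \<in> S"
  using zero_ball_abs_le by fastforce

lemma zero_ball_double: "zero_ball S \<Longrightarrow> s \<in> S \<Longrightarrow> 2 * s \<in> S"
  using zero_ballD vle_mult_of_int[of s 2] by simp

lemma zero_ball_half: "zero_ball S \<Longrightarrow> w \<notin> S \<Longrightarrow> w / 2 \<notin> S"
  using zero_ball_double by fastforce

lemma zero_ball_add: "zero_ball S \<Longrightarrow> s \<in> S \<Longrightarrow> t \<in> S \<Longrightarrow> s + t \<in> S"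
  using vle_total[of s t] zero_ballD vle_add_right by (metis add.commute)

lemma zero_ball_diff: "zero_ball S \<Longrightarrow> s \<in> S \<Longrightarrow> t \<in> S \<Longrightarrow> s - t \<in> S"
  using zero_ball_add[of S s "-t"] zero_ball_minus by fastforce

lemma zero_ball_linear: "zero_ball S \<Longrightarrow> zero_ball T \<Longrightarrow> S \<subseteq> T \<or> T \<subseteq> S"
  using zero_ballD vle_total by blast

lemma zero_ball_vle_ge: "zero_ball {y. vle c y}"
  unfolding zero_ball_def using vle_trans by auto

lemma zero_ball_vle_gt: "c \<noteq> 0 \<Longrightarrow> zero_ball {y. vle c y \<and> \<not> vle y c}"
  unfolding zero_ball_def using vle_trans by auto

lemma zero_ball_final_segment:
  assumes "final_segment UNIV T"
  shows "zero_ball {g::'a::linordered_field. vclass g \<in> T \<or> g = 0}"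
  unfolding zero_ball_def
proof (intro conjI ballI allI impI)
  fix s h :: 'a
  assume "s \<in> {g. vclass g \<in> T \<or> g = 0}" and "vle s h"
  then show "h \<in> {g. vclass g \<in> T \<or> g = 0}"
  proof (cases "h = 0")
    case False
    with \<open>vle s h\<close> have "s \<noteq> 0" by auto
    with \<open>s \<in> _\<close> \<open>vle s h\<close> False show ?thesis
      using assms unfolding final_segment_def by blast
  qed simp
qed simp

lemma ball_UNIV_translate_zero_ball:
  assumes "is_ball UNIV X"
  obtains x G where "zero_ball G" "X = {b::'a::linordered_field. x - b \<in> G}"
proof -
  obtain x T where "final_segment UNIV T" "X = ball UNIV T x"
    using assms unfolding is_ball_def by blast
  then show ?thesis
    using that[OF zero_ball_final_segment] unfolding ball_def by auto
qed

lemma translate_zero_ball_recenter: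
  assumes "zero_ball G" "x - z \<in> G"
  shows "{b. x - b \<in> G} = {b. z - b \<in> G}"
proof -
  have "x - b \<in> G \<longleftrightarrow> z - b \<in> G" for b
    using zero_ball_diff[OF assms(1) _ assms(2), of "x - b"]
      zero_ball_add[OF assms(1) _ assms(2), of "z - b"] by auto
  then show ?thesis by blast
qed

lemma fst_cut_plus: "fst (cut_plus K A) = {x\<in>K. \<exists>a\<in>A. x \<le> a}"
  by (simp add: cut_plus_def Let_def)

lemma fst_cut_minus: "fst (cut_minus K A) = K - {x\<in>K. \<exists>a\<in>A. a \<le> x}"
  by (simp add: cut_minus_def Let_def)

lemma cut_plus_cuts [simp]: "cut_plus K A \<in> cuts K"
  unfolding cut_plus_def cuts_def Let_def by (auto simp: not_le intro: order.strict_trans1)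

lemma cut_minus_cuts [simp]: "cut_minus K A \<in> cuts K"
  unfolding cut_minus_def cuts_def Let_def by (auto simp: not_le) (meson order_trans not_le)

lemma bot_cut_cuts [simp]: "({}, K) \<in> cuts K"
  and top_cut_cuts [simp]: "(K, {}) \<in> cuts K"
  unfolding cuts_def by auto

lemma cuts_fst_subset: "C \<in> cuts K \<Longrightarrow> fst C \<subseteq> K"
  unfolding cuts_def by force

lemma cuts_fst_down: "C \<in> cuts K \<Longrightarrow> x \<in> fst C \<Longrightarrow> y \<in> K \<Longrightarrow> y \<le> x \<Longrightarrow> y \<in> fst C"
  unfolding cuts_def by force

lemma cuts_fst_less: "C \<in> cuts K \<Longrightarrow> x \<in> fst C \<Longrightarrow> y \<in> K \<Longrightarrow> y \<notin> fst C \<Longrightarrow> x < y"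
  unfolding cuts_def by force

lemma cut_lessI:
  assumes "C1 \<in> cuts K" "C2 \<in> cuts K" "z \<in> fst C2" "z \<notin> fst C1"
  shows "cut_less C1 C2"
proof -
  have "w \<in> fst C2" if "w \<in> fst C1" for w
    using cuts_fst_less[OF assms(1) that _ assms(4)] cuts_fst_down[OF assms(2,3)]
      cuts_fst_subset[OF assms(1)] cuts_fst_subset[OF assms(2)] assms(3) that by fastforce
  then show ?thesis unfolding cut_less_def using assms(3,4) by blast
qed

lemma not_cut_less: "C1 \<in> cuts K \<Longrightarrow> C2 \<in> cuts K \<Longrightarrow> \<not> cut_less C1 C2 \<Longrightarrow> fst C2 \<subseteq> fst C1"
  using cut_lessI by blast

lemma bot_cut_le: "C \<in> cuts K \<Longrightarrow> cut_less ({}, K) C \<or> C = ({}, K)"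
  unfolding cut_less_def cuts_def by auto

lemma top_cut_ge: "C \<in> cuts K \<Longrightarrow> cut_less C (K, {}) \<or> C = (K, {})"
  unfolding cut_less_def cuts_def by (auto, blast)

lemma cut_less_trans: "cut_less A B \<Longrightarrow> cut_less B C \<Longrightarrow> cut_less A C"
  unfolding cut_less_def by blast

lemma cut_less_irrefl: "\<not> cut_less A A"
  unfolding cut_less_def by blast

section \<open>Cuts of \<open>F\<close> inside and outside a ball around zero\<close>

abbreviation cut_below :: "'a::linordered_field set \<Rightarrow> 'a cut" where
  "cut_below A \<equiv> cut_minus UNIV A"

abbreviation cut_above :: "'a::linordered_field set \<Rightarrow> 'a cut" where
  "cut_above A \<equiv> cut_plus UNIV A"

lemma mem_fst_cut_above: "x \<in> fst (cut_above A) \<longleftrightarrow> (\<exists>a\<in>A. x \<le> a)"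
  by (simp add: fst_cut_plus)

lemma mem_fst_cut_below: "x \<in> fst (cut_below A) \<longleftrightarrow> (\<forall>a\<in>A. a > x)"
  by (auto simp: fst_cut_minus not_le)

definition inner_cuts :: "'a::linordered_field set \<Rightarrow> 'a cut set" where
  "inner_cuts Y = {C\<in>cuts UNIV. cut_less (cut_below Y) C \<and> cut_less C (cut_above Y)}"

definition outer_cuts :: "'a::linordered_field set \<Rightarrow> 'a cut set" where
  "outer_cuts Y = {C\<in>cuts UNIV. cut_less C (cut_below Y) \<or> cut_less (cut_above Y) C}"

lemma inner_outer_cuts_disjoint: "inner_cuts Y \<inter> outer_cuts Y = {}"
  unfolding inner_cuts_def outer_cuts_def cut_less_def by blast

lemma boundary_cuts_not_inner: "cut_below Y \<notin> inner_cuts Y" "cut_above Y \<notin> inner_cuts Y"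
  unfolding inner_cuts_def using cut_less_irrefl by blast+

lemma boundary_cuts_not_outer:
  assumes "zero_ball Y"
  shows "cut_below Y \<notin> outer_cuts Y" "cut_above Y \<notin> outer_cuts Y"
proof -
  have "fst (cut_below Y) \<subseteq> fst (cut_above Y)"
    using zero_ball_zero[OF assms]
    by (auto simp: mem_fst_cut_below mem_fst_cut_above) (blast intro: less_imp_le)
  then show "cut_below Y \<notin> outer_cuts Y" "cut_above Y \<notin> outer_cuts Y"
    unfolding outer_cuts_def cut_less_def by blast+
qed

lemma concentric_ball_position:
  fixes G Y :: "'a::linordered_field set"
  assumes G: "zero_ball G" and Y: "zero_ball Y" and z: "z \<in> Y"
  defines "X \<equiv> {b. z - b \<in> G}"
  shows "X = Y \<or> {cut_below X, cut_above X} \<subseteq> inner_cuts Y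
           \<or> {cut_below X, cut_above X} \<subseteq> outer_cuts Y"
proof -
  have zX: "z \<in> X" unfolding X_def using zero_ball_zero[OF G] by simp
  consider "G = Y" | "G \<subset> Y" | "Y \<subset> G" using zero_ball_linear[OF G Y] by blast
  then show ?thesis
  proof cases
    case 1
    have "z - b \<in> Y \<longleftrightarrow> b \<in> Y" for b
      using zero_ball_diff[OF Y z, of b] zero_ball_diff[OF Y z, of "z - b"] by auto
    then have "X = Y" unfolding X_def 1 by blast
    then show ?thesis by blast
  next
    case 2
    then obtain w where w: "w \<in> Y" "w \<notin> G" by blast
    have zw: "z - \<bar>w\<bar> \<in> Y" "z + \<bar>w\<bar> \<in> Y"
      using zero_ball_diff[OF Y z] zero_ball_add[OF Y z] zero_ball_abs[OF Y w(1)] by blast+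
    have bound: "z - \<bar>w\<bar> < b \<and> b < z + \<bar>w\<bar>" if "b \<in> X" for b
      using zero_ball_abs_less[OF G _ w(2), of "z - b"] that unfolding X_def by auto
    have "cut_less (cut_below Y) (cut_below X)"
      by (rule cut_lessI[of _ UNIV _ "z - \<bar>w\<bar>"]) (use bound zw in \<open>auto simp: mem_fst_cut_below\<close>)
    moreover have "cut_less (cut_below X) (cut_above Y)"
      by (rule cut_lessI[of _ UNIV _ z]) (use zX z in \<open>auto simp: mem_fst_cut_below mem_fst_cut_above\<close>)
    moreover have "cut_less (cut_below Y) (cut_above X)"
      by (rule cut_lessI[of _ UNIV _ z]) (use zX z in \<open>auto simp: mem_fst_cut_below mem_fst_cut_above\<close>)
    moreover have "cut_less (cut_above X) (cut_above Y)"
      by (rule cut_lessI[of _ UNIV _ "z + \<bar>w\<bar>"]) (use bound zw in \<open>force simp: mem_fst_cut_above\<close>)+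
    ultimately show ?thesis unfolding inner_cuts_def by simp
  next
    case 3
    then obtain w where w: "w \<in> G" "w \<notin> Y" by blast
    have zw: "z - \<bar>w\<bar> \<in> X" "z + \<bar>w\<bar> \<in> X"
      unfolding X_def using zero_ball_abs[OF G w(1)] zero_ball_minus[OF G] by auto
    have bound: "z - \<bar>w\<bar> < y \<and> y < z + \<bar>w\<bar>" if "y \<in> Y" for y
      using zero_ball_abs_less[OF Y _ w(2), of "y - z"] zero_ball_diff[OF Y that z] by auto
    have "cut_less (cut_below X) (cut_below Y)"
      by (rule cut_lessI[of _ UNIV _ "z - \<bar>w\<bar>"]) (use bound zw in \<open>auto simp: mem_fst_cut_below\<close>)
    moreover have "cut_less (cut_above Y) (cut_above X)"
      by (rule cut_lessI[of _ UNIV _ "z + \<bar>w\<bar>"]) (use bound zw in \<open>force simp: mem_fst_cut_above\<close>)+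
    ultimately show ?thesis unfolding outer_cuts_def by simp
  qed
qed

lemma disjoint_ball_position:
  fixes G Y :: "'a::linordered_field set"
  assumes G: "zero_ball G" and Y: "zero_ball Y"
    and X: "X = {b. x - b \<in> G}" and disjoint: "X \<inter> Y = {}"
  shows "{cut_below X, cut_above X} \<subseteq> outer_cuts Y"
proof -
  have xX: "x \<in> X" and xY: "x \<notin> Y" and xG: "x \<notin> G"
    using X disjoint zero_ball_zero[OF G] zero_ball_zero[OF Y] by auto
  \<comment> \<open>\<open>x/2\<close> lies strictly between the balls \<open>Y\<close> around 0 and \<open>X\<close> around \<open>x\<close>.\<close>
  define z where "z = x / 2"
  have zY: "z \<notin> Y" and zG: "z \<notin> G"
    unfolding z_def using zero_ball_half[OF Y xY] zero_ball_half[OF G xG] .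
  have X_near_x: "\<bar>x - b\<bar> < \<bar>z\<bar>" if "b \<in> X" for b
    using zero_ball_abs_less[OF G _ zG] that X by blast
  have Y_near_0: "\<bar>y\<bar> < \<bar>z\<bar>" if "y \<in> Y" for y
    using zero_ball_abs_less[OF Y that zY] .
  consider "0 < x" | "x < 0" using xY zero_ball_zero[OF Y] by fastforce
  then show ?thesis
  proof cases
    case 1
    then have X_above: "z < b" if "b \<in> X" for b
      using X_near_x[OF that] abs_ge_self[of "x - b"] unfolding z_def by simp
    have Y_below: "y < z" if "y \<in> Y" for y
      using Y_near_0[OF that] 1 unfolding z_def by (simp add: abs_less_iff)
    have "z \<notin> fst (cut_above Y)" using Y_below by (force simp: mem_fst_cut_above)
    moreover have "z \<in> fst (cut_below X)" "z \<in> fst (cut_above X)"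
      using X_above xX 1 by (auto simp: mem_fst_cut_below mem_fst_cut_above z_def intro!: bexI[of _ x])
    ultimately have "cut_less (cut_above Y) (cut_below X)" "cut_less (cut_above Y) (cut_above X)"
      by (intro cut_lessI[of _ UNIV _ z]; simp)+
    then show ?thesis unfolding outer_cuts_def by simp
  next
    case 2
    then have X_below: "b < z" if "b \<in> X" for b
      using X_near_x[OF that] unfolding z_def by (simp add: abs_diff_less_iff)
    have Y_above: "z < y" if "y \<in> Y" for y
      using Y_near_0[OF that] 2 unfolding z_def by (simp add: abs_less_iff)
    have "z \<in> fst (cut_below Y)" using Y_above by (simp add: mem_fst_cut_below)
    moreover have "z \<notin> fst (cut_below X)" "z \<notin> fst (cut_above X)"
      using X_below xX 2 by (force simp: mem_fst_cut_below mem_fst_cut_above z_def)+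
    ultimately have "cut_less (cut_below X) (cut_below Y)" "cut_less (cut_above X) (cut_below Y)"
      by (intro cut_lessI[of _ UNIV _ z]; simp)+
    then show ?thesis unfolding outer_cuts_def by simp
  qed
qed

lemma ball_position:
  fixes Y :: "'a::linordered_field set"
  assumes Y: "zero_ball Y" and X: "is_ball UNIV X"
  shows "X = Y \<or> {cut_below X, cut_above X} \<subseteq> inner_cuts Y
           \<or> {cut_below X, cut_above X} \<subseteq> outer_cuts Y"
proof -
  obtain x G where G: "zero_ball G" and XG: "X = {b. x - b \<in> G}"
    using ball_UNIV_translate_zero_ball[OF X] by blast
  show ?thesis
  proof (cases "X \<inter> Y = {}")
    case True
    then show ?thesis using disjoint_ball_position[OF G Y XG] by blast
  next
    case False
    then obtain z where "z \<in> X" "z \<in> Y" by blast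
    then show ?thesis
      using concentric_ball_position[OF G Y] translate_zero_ball_recenter[OF G] XG by simp
  qed
qed

lemma full_set_UNIV_if_balls_respected:
  assumes "U \<subseteq> cuts UNIV"
    and "\<And>X. is_ball UNIV X \<Longrightarrow> cut_below X \<in> U \<longleftrightarrow> cut_above X \<in> U"
  shows "full_set UNIV U"
  unfolding full_set_def cut_equiv_def using assms by blast

lemma full_open_inner_cuts:
  assumes "zero_ball Y"
  shows "full_open UNIV (inner_cuts Y)"
  unfolding full_open_def
proof
  show "full_set UNIV (inner_cuts Y)"
  proof (rule full_set_UNIV_if_balls_respected)
    show "inner_cuts Y \<subseteq> cuts UNIV" by (auto simp: inner_cuts_def)
    fix X :: "'a set" assume "is_ball UNIV X"
    from ball_position[OF assms this]
    show "cut_below X \<in> inner_cuts Y \<longleftrightarrow> cut_above X \<in> inner_cuts Y"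
      using boundary_cuts_not_inner inner_outer_cuts_disjoint by blast
  qed
  have "interval_basic UNIV (inner_cuts Y)"
    unfolding interval_basic_def inner_cuts_def using cut_minus_cuts cut_plus_cuts by blast
  then show "interval_open UNIV (inner_cuts Y)"
    unfolding interval_open_def inner_cuts_def by blast
qed

lemma full_open_outer_cuts:
  assumes "zero_ball Y"
  shows "full_open UNIV (outer_cuts Y)"
  unfolding full_open_def
proof
  show "full_set UNIV (outer_cuts Y)"
  proof (rule full_set_UNIV_if_balls_respected)
    show "outer_cuts Y \<subseteq> cuts UNIV" by (auto simp: outer_cuts_def)
    fix X :: "'a set" assume "is_ball UNIV X"
    from ball_position[OF assms this]
    show "cut_below X \<in> outer_cuts Y \<longleftrightarrow> cut_above X \<in> outer_cuts Y"
      using boundary_cuts_not_outer[OF assms] inner_outer_cuts_disjoint by blast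
  qed
  let ?lower = "{C\<in>cuts UNIV. (cut_less ({}, UNIV) C \<or> C = ({}, UNIV)) \<and> cut_less C (cut_below Y)}"
  let ?upper = "{C\<in>cuts UNIV. cut_less (cut_above Y) C \<and> (cut_less C (UNIV, {}) \<or> C = (UNIV, {}))}"
  have "interval_basic UNIV ?lower" "interval_basic UNIV ?upper"
    unfolding interval_basic_def by auto
  moreover have "outer_cuts Y = ?lower \<union> ?upper"
    unfolding outer_cuts_def using bot_cut_le top_cut_ge by blast
  ultimately show "interval_open UNIV (outer_cuts Y)"
    unfolding interval_open_def by blast
qed

lemma not_inner_cuts_imp_outer_cuts:
  fixes Y Y' :: "'a::linordered_field set"
  assumes "zero_ball Y" "zero_ball Y'" "Y' \<subset> Y"
    and C: "C \<in> cuts UNIV" "0 \<in> fst C" "C \<notin> inner_cuts Y"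
  shows "C \<in> outer_cuts Y'"
proof -
  obtain w where w: "w \<in> Y" "w \<notin> Y'" using assms(3) by blast
  have "cut_less (cut_below Y) C"
    using C(2) zero_ball_zero[OF assms(1)] by (intro cut_lessI[OF _ C(1)]) (auto simp: mem_fst_cut_below)
  then have "fst (cut_above Y) \<subseteq> fst C"
    using C(3) not_cut_less[OF C(1)] unfolding inner_cuts_def by (simp add: C(1))
  moreover have "\<bar>w\<bar> \<in> fst (cut_above Y)"
    using zero_ball_abs[OF assms(1) w(1)] by (auto simp: mem_fst_cut_above)
  ultimately have "\<bar>w\<bar> \<in> fst C" by blast
  moreover have "\<bar>w\<bar> \<notin> fst (cut_above Y')"
    using zero_ball_abs_less[OF assms(2) _ w(2)] by (force simp: mem_fst_cut_above)
  ultimately have "cut_less (cut_above Y') C"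
    by (intro cut_lessI[OF cut_plus_cuts C(1)])
  then show ?thesis unfolding outer_cuts_def using C(1) by blast
qed

section \<open>Principal cuts accumulating at a cut\<close>

definition cut_plus_limit_below :: "'a::linordered_field set \<Rightarrow> 'a set \<Rightarrow> 'a cut \<Rightarrow> bool" where
  "cut_plus_limit_below K A C \<longleftrightarrow> cut_less ({}, K) C \<and>
     (\<forall>C1\<in>cuts K. cut_less C1 C \<longrightarrow>
        (\<exists>r\<in>A. cut_less C1 (cut_plus K {r}) \<and> cut_less (cut_plus K {r}) C))"

definition cut_plus_limit_above :: "'a::linordered_field set \<Rightarrow> 'a set \<Rightarrow> 'a cut \<Rightarrow> bool" where
  "cut_plus_limit_above K A C \<longleftrightarrow> cut_less C (K, {}) \<and>
     (\<forall>C2\<in>cuts K. cut_less C C2 \<longrightarrow>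
        (\<exists>r\<in>A. cut_less C (cut_plus K {r}) \<and> cut_less (cut_plus K {r}) C2))"

lemma interval_basic_cut_plus_limit_below:
  assumes "interval_basic K W" "C \<in> W" "cut_plus_limit_below K A C"
  shows "\<exists>r\<in>A. cut_plus K {r} \<in> W"
proof -
  have approx: "\<exists>r\<in>A. cut_less C1 (cut_plus K {r}) \<and> cut_less (cut_plus K {r}) C"
    if "C1 \<in> cuts K" "cut_less C1 C" for C1
    using assms(3) that unfolding cut_plus_limit_below_def by blast
  have bot: "cut_less ({}, K) C" using assms(3) unfolding cut_plus_limit_below_def by blast
  from assms(1) show ?thesis unfolding interval_basic_def
  proof (elim disjE bexE)
    fix C1 C2 assume "C1 \<in> cuts K" and W: "W = {C \<in> cuts K. cut_less C1 C \<and> cut_less C C2}"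
    with assms(2) have "cut_less C1 C" "cut_less C C2" by auto
    with approx[OF \<open>C1 \<in> cuts K\<close>] show ?thesis unfolding W by (auto intro: cut_less_trans)
  next
    fix C1 assume "C1 \<in> cuts K"
      and W: "W = {C \<in> cuts K. cut_less C1 C \<and> (cut_less C (K, {}) \<or> C = (K, {}))}"
    with assms(2) have "cut_less C1 C" by auto
    with approx[OF \<open>C1 \<in> cuts K\<close>] obtain r where "r \<in> A" "cut_less C1 (cut_plus K {r})"
      by blast
    then show ?thesis unfolding W using top_cut_ge[of "cut_plus K {r}" K] by auto
  next
    fix C2 assume W: "W = {C \<in> cuts K. (cut_less ({}, K) C \<or> C = ({}, K)) \<and> cut_less C C2}"
    with assms(2) have "cut_less C C2" by auto
    with approx[OF bot_cut_cuts bot] show ?thesis unfolding W by (auto intro: cut_less_trans)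
  qed
qed

lemma interval_basic_cut_plus_limit_above:
  assumes "interval_basic K W" "C \<in> W" "cut_plus_limit_above K A C"
  shows "\<exists>r\<in>A. cut_plus K {r} \<in> W"
proof -
  have approx: "\<exists>r\<in>A. cut_less C (cut_plus K {r}) \<and> cut_less (cut_plus K {r}) C2"
    if "C2 \<in> cuts K" "cut_less C C2" for C2
    using assms(3) that unfolding cut_plus_limit_above_def by blast
  have top: "cut_less C (K, {})" using assms(3) unfolding cut_plus_limit_above_def by blast
  from assms(1) show ?thesis unfolding interval_basic_def
  proof (elim disjE bexE)
    fix C1 C2 assume "C2 \<in> cuts K" and W: "W = {C \<in> cuts K. cut_less C1 C \<and> cut_less C C2}"
    with assms(2) have "cut_less C1 C" "cut_less C C2" by auto
    with approx[OF \<open>C2 \<in> cuts K\<close>] show ?thesis unfolding W by (auto intro: cut_less_trans)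
  next
    fix C1 assume W: "W = {C \<in> cuts K. cut_less C1 C \<and> (cut_less C (K, {}) \<or> C = (K, {}))}"
    with assms(2) have "cut_less C1 C" by auto
    with approx[OF top_cut_cuts top] show ?thesis unfolding W by (auto intro: cut_less_trans)
  next
    fix C2 assume "C2 \<in> cuts K"
      and W: "W = {C \<in> cuts K. (cut_less ({}, K) C \<or> C = ({}, K)) \<and> cut_less C C2}"
    with assms(2) have "cut_less C C2" by auto
    with approx[OF \<open>C2 \<in> cuts K\<close>] obtain r where "r \<in> A" "cut_less (cut_plus K {r}) C2"
      by blast
    then show ?thesis unfolding W using bot_cut_le[of "cut_plus K {r}" K] by auto
  qed
qed

lemma subfield_closed:
  assumes "subfield R" "x \<in> R"
  shows "\<bar>x\<bar> \<in> R" "2 * x \<in> R" "x / 2 \<in> R"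
proof -
  have two: "(2::'a) \<in> R" using assms(1) unfolding subfield_def one_add_one[symmetric] by blast
  show "\<bar>x\<bar> \<in> R" using assms unfolding subfield_def by (cases "x < 0") auto
  show "2 * x \<in> R" using assms two unfolding subfield_def by blast
  have "inverse (2::'a) \<in> R"
    using assms(1) two unfolding subfield_def by (metis zero_neq_numeral)
  then have "x * inverse 2 \<in> R" using assms unfolding subfield_def by blast
  then show "x / 2 \<in> R" by (simp only: divide_inverse)
qed

lemma cut_plus_zero_ball_limit_above:
  fixes R Y :: "'a::linordered_field set"
  assumes R: "subfield R" and Y: "zero_ball Y" and a: "a \<in> R" "a \<notin> Y"
  shows "cut_plus_limit_above R {r\<in>R. 0 < r \<and> r \<notin> Y} (cut_plus R (R \<inter> Y))"
proof -
  have zero: "0 \<in> R \<inter> Y" using R Y unfolding subfield_def zero_ball_def by blast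
  have beyond: "cut_less (cut_plus R (R \<inter> Y)) (cut_plus R {r})"
    if "r \<in> R" "0 < r" "r \<notin> Y" for r
    using zero_ball_abs_less[OF Y _ that(3)] that(1,2)
    by (intro cut_lessI[of _ R _ r]) (fastforce simp: fst_cut_plus)+
  have "cut_less (cut_plus R (R \<inter> Y)) (R, {})"
    using zero_ball_abs_less[OF Y _ a(2)] a(1)
    by (intro cut_lessI[of _ R _ "\<bar>a\<bar>"]) (fastforce simp: fst_cut_plus subfield_closed[OF R])+
  moreover have "\<exists>r\<in>{r\<in>R. 0 < r \<and> r \<notin> Y}.
      cut_less (cut_plus R (R \<inter> Y)) (cut_plus R {r}) \<and> cut_less (cut_plus R {r}) C2"
    if C2: "C2 \<in> cuts R" "cut_less (cut_plus R (R \<inter> Y)) C2" for C2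
  proof -
    obtain d where d: "d \<in> fst C2" "d \<notin> fst (cut_plus R (R \<inter> Y))"
      using C2(2) unfolding cut_less_def by blast
    have dR: "d \<in> R" using d(1) cuts_fst_subset[OF C2(1)] by blast
    have "\<not> d \<le> 0" "d \<notin> Y" using d(2) dR zero by (auto simp: fst_cut_plus)
    then have "0 < d" "d \<notin> Y" by simp_all
    then have "d / 2 \<in> {r\<in>R. 0 < r \<and> r \<notin> Y}"
      using zero_ball_half[OF Y] subfield_closed[OF R dR] by simp
    moreover have "cut_less (cut_plus R {d / 2}) C2"
      using \<open>0 < d\<close> dR d(1) by (intro cut_lessI[OF _ C2(1)]) (auto simp: fst_cut_plus)
    ultimately show ?thesis using beyond by blast
  qed
  ultimately show ?thesis unfolding cut_plus_limit_above_def by blast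
qed

lemma cut_plus_zero_ball_limit_below:
  fixes R Y :: "'a::linordered_field set"
  assumes R: "subfield R" and Y: "zero_ball Y" and b: "b \<in> R \<inter> Y" "b \<noteq> 0"
  shows "cut_plus_limit_below R {s\<in>R \<inter> Y. 0 < s} (cut_plus R (R \<inter> Y))"
proof -
  have zero: "0 \<in> R \<inter> Y" using R Y unfolding subfield_def zero_ball_def by blast
  have below: "cut_less (cut_plus R {s}) (cut_plus R (R \<inter> Y))" if "s \<in> R \<inter> Y" "0 < s" for s
    using that zero_ball_double[OF Y] subfield_closed[OF R]
    by (intro cut_lessI[of _ R _ "2 * s"]) (auto simp: fst_cut_plus)
  have "cut_less ({}, R) (cut_plus R (R \<inter> Y))"
    using zero by (intro cut_lessI[of _ R _ 0]) (auto simp: fst_cut_plus)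
  moreover have "\<exists>s\<in>{s\<in>R \<inter> Y. 0 < s}.
      cut_less C1 (cut_plus R {s}) \<and> cut_less (cut_plus R {s}) (cut_plus R (R \<inter> Y))"
    if C1: "C1 \<in> cuts R" "cut_less C1 (cut_plus R (R \<inter> Y))" for C1
  proof -
    obtain d e where d: "d \<notin> fst C1" "e \<in> R \<inter> Y" "d \<le> e" "d \<in> R"
      using C1(2) unfolding cut_less_def fst_cut_plus by blast
    \<comment> \<open>\<open>b\<close> is only needed to make \<open>s\<close> positive.\<close>
    define s where "s = max \<bar>e\<bar> \<bar>b\<bar>"
    have s: "s \<in> R \<inter> Y" "0 < s" "d \<le> s"
      using d(2,3) b zero_ball_abs[OF Y] subfield_closed[OF R] by (auto simp: s_def max_def)
    then have "cut_less C1 (cut_plus R {s})"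
      using cuts_fst_down[OF C1(1) _ d(4) s(3)] d(1)
      by (intro cut_lessI[OF C1(1), of _ s]) (auto simp: fst_cut_plus)
    then show ?thesis using s below by blast
  qed
  ultimately show ?thesis unfolding cut_plus_limit_below_def by blast
qed

section \<open>Continuous maps compatible with restriction\<close>

lemma compatible_restriction_mem_iff:
  assumes "compatible_restriction R f" "C \<in> cuts R" "x \<in> R"
  shows "x \<in> fst (f C) \<longleftrightarrow> x \<in> fst C"
proof -
  have "fst (f C) \<inter> R = fst C"
    using assms(1,2) unfolding compatible_restriction_def by (metis fst_conv)
  then show ?thesis using assms(3) by blast
qed

lemma full_continuous_preimage_nbhd:
  assumes "full_continuous R UNIV f" "full_open UNIV U" "C \<in> cuts R" "f C \<in> U"
  obtains W where "interval_basic R W" "C \<in> W" "\<And>C'. C' \<in> W \<Longrightarrow> f C' \<in> U"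
proof -
  have "interval_open R {C \<in> cuts R. f C \<in> U}"
    using assms(1,2) unfolding full_continuous_def full_open_def by blast
  then show ?thesis using assms(3,4) that unfolding interval_open_def by blast
qed

lemma image_cut_plus_zero_ball_not_inner:
  fixes R Y :: "'a::linordered_field set"
  assumes "subfield R" "zero_ball Y" "a \<in> R" "a \<notin> Y"
    and cont: "full_continuous R UNIV f" and compat: "compatible_restriction R f"
  shows "f (cut_plus R (R \<inter> Y)) \<notin> inner_cuts Y"
proof
  assume "f (cut_plus R (R \<inter> Y)) \<in> inner_cuts Y"
  then obtain W where W: "interval_basic R W" "cut_plus R (R \<inter> Y) \<in> W"
      "\<And>C'. C' \<in> W \<Longrightarrow> f C' \<in> inner_cuts Y"
    using full_continuous_preimage_nbhd[OF cont full_open_inner_cuts[OF assms(2)] cut_plus_cuts] by blast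
  obtain r where r: "r \<in> R" "0 < r" "r \<notin> Y" "f (cut_plus R {r}) \<in> inner_cuts Y"
    using interval_basic_cut_plus_limit_above[OF W(1,2)
        cut_plus_zero_ball_limit_above[OF assms(1-4)]] W(3) by blast
  then have "r \<in> fst (cut_above Y)"
    using compatible_restriction_mem_iff[OF compat cut_plus_cuts r(1)]
    unfolding inner_cuts_def cut_less_def by (auto simp: fst_cut_plus)
  then show False
    using zero_ball_abs_less[OF assms(2) _ r(3)] r(2) by (force simp: mem_fst_cut_above)
qed

lemma image_cut_plus_zero_ball_not_outer:
  fixes R Y :: "'a::linordered_field set"
  assumes "subfield R" "zero_ball Y" "b \<in> R \<inter> Y" "b \<noteq> 0"
    and cont: "full_continuous R UNIV f" and compat: "compatible_restriction R f"
  shows "f (cut_plus R (R \<inter> Y)) \<notin> outer_cuts Y"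
proof
  assume "f (cut_plus R (R \<inter> Y)) \<in> outer_cuts Y"
  then obtain W where W: "interval_basic R W" "cut_plus R (R \<inter> Y) \<in> W"
      "\<And>C'. C' \<in> W \<Longrightarrow> f C' \<in> outer_cuts Y"
    using full_continuous_preimage_nbhd[OF cont full_open_outer_cuts[OF assms(2)] cut_plus_cuts] by blast
  obtain s where s: "s \<in> R" "s \<in> Y" "0 < s" "f (cut_plus R {s}) \<in> outer_cuts Y"
    using interval_basic_cut_plus_limit_below[OF W(1,2)
        cut_plus_zero_ball_limit_below[OF assms(1-4)]] W(3) by blast
  have "s \<in> fst (f (cut_plus R {s}))" "2 * s \<notin> fst (f (cut_plus R {s}))"
    using compatible_restriction_mem_iff[OF compat cut_plus_cuts] s(1,3) subfield_closed[OF assms(1)]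
    by (auto simp: fst_cut_plus)
  moreover have "s \<notin> fst (cut_below Y)" "2 * s \<in> fst (cut_above Y)"
    using s(2) zero_ball_double[OF assms(2)] by (auto simp: mem_fst_cut_below mem_fst_cut_above)
  ultimately show False
    using s(4) unfolding outer_cuts_def cut_less_def by blast
qed

lemma not_value_convex_zero_balls:
  fixes R :: "'a::linordered_field set"
  assumes "\<not> value_convex R"
  obtains Y Y' a b where "zero_ball Y" "zero_ball Y'" "Y' \<subset> Y" "R \<inter> Y' = R \<inter> Y"
    "a \<in> R" "a \<notin> Y" "b \<in> R \<inter> Y'" "b \<noteq> 0"
proof -
  obtain a b c where a: "a \<in> R" "a \<noteq> 0" and b: "b \<in> R" "b \<noteq> 0" and "c \<noteq> 0"
    and "vle a c" "vle c b" and c_value: "vclass c \<notin> value_set R"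
    using assms unfolding value_convex_def by blast
  have no_value_c: "\<not> (vle c r \<and> vle r c)" if "r \<in> R" "r \<noteq> 0" for r
    using c_value that unfolding value_set_def vclass_def by (blast intro: vle_trans)
  define Y where "Y = {y::'a. vle c y}"
  define Y' where "Y' = {y::'a. vle c y \<and> \<not> vle y c}"
  show ?thesis
  proof (rule that[of Y Y' a b])
    show "zero_ball Y" "zero_ball Y'"
      unfolding Y_def Y'_def using zero_ball_vle_ge zero_ball_vle_gt \<open>c \<noteq> 0\<close> by blast+
    show "R \<inter> Y' = R \<inter> Y"
      using no_value_c \<open>c \<noteq> 0\<close> by (auto simp: Y_def Y'_def) (metis vle_0_left_iff)
    show "Y' \<subset> Y" using vle_if_abs_le[of c c] by (auto simp: Y_def Y'_def)
    show "a \<notin> Y" "b \<in> R \<inter> Y'"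
      using no_value_c a b \<open>vle a c\<close> \<open>vle c b\<close> by (auto simp: Y_def Y'_def)
  qed (use a b in auto)
qed

theorem proposition4p9:
  fixes R :: "'a::linordered_field set"
  assumes "subfield R"
    and "\<not> value_convex R"
  shows "\<not> (\<exists>f. (\<forall>C\<in>cuts R. f C \<in> cuts (UNIV :: 'a set)) \<and> inj_on f (cuts R) \<and>
              full_continuous R (UNIV :: 'a set) f \<and> compatible_restriction R f)"
proof
  assume "\<exists>f. (\<forall>C\<in>cuts R. f C \<in> cuts (UNIV :: 'a set)) \<and> inj_on f (cuts R) \<and>
              full_continuous R (UNIV :: 'a set) f \<and> compatible_restriction R f"
  then obtain f where maps: "\<forall>C\<in>cuts R. f C \<in> cuts UNIV"
    and cont: "full_continuous R UNIV f" and compat: "compatible_restriction R f" by blast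
  obtain Y Y' a b where Y: "zero_ball Y" and Y': "zero_ball Y'" and "Y' \<subset> Y"
    and same_trace: "R \<inter> Y' = R \<inter> Y" and a: "a \<in> R" "a \<notin> Y" and b: "b \<in> R \<inter> Y'" "b \<noteq> 0"
    using not_value_convex_zero_balls[OF assms(2)] by blast
  define C where "C = cut_plus R (R \<inter> Y)"
  have "f C \<in> cuts UNIV" using maps by (simp add: C_def)
  moreover have "0 \<in> fst (f C)"
    using compatible_restriction_mem_iff[OF compat cut_plus_cuts] assms(1) zero_ball_zero[OF Y]
    unfolding subfield_def C_def by (auto simp: fst_cut_plus)
  moreover have "f C \<notin> inner_cuts Y" unfolding C_def
    by (rule image_cut_plus_zero_ball_not_inner[OF assms(1) Y a cont compat])
  ultimately have "f C \<in> outer_cuts Y'"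
    by (rule not_inner_cuts_imp_outer_cuts[OF Y Y' \<open>Y' \<subset> Y\<close>])
  moreover have "f C \<notin> outer_cuts Y'"
    using image_cut_plus_zero_ball_not_outer[OF assms(1) Y' b cont compat]
    unfolding C_def same_trace .
  ultimately show False by contradiction
qed

end
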